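(* Let $(\gamma_j)_{j\ge 1}$ be a sequence of reals with $1\ge\gamma_1\ge\gamma_2\ge\cdots\ge 0$, and consider the associated product weights $\gamma_{\mathfrak u}=\prod_{j\in\mathfrak u}\gamma_j$. Then: (1) The centered regular grid with different mesh-sizes achieves weak tractability (WT) for the $\boldsymbol\gamma$-weighted star discrepancy if and only if $\lim_{j\to\infty} j\gamma_j=0$. (2) The centered regular grid with different mesh-sizes achieves uniform weak tractability (UWT) for the $\boldsymbol\gamma$-weighted star discrepancy if and only if $\lim_{j\to\infty} j^n\gamma_j=0$ for all $n\in\mathbb N$.
   Context: For $d\in\mathbb N$ write $[d]=\{1,\dots,d\}$. For mesh-sizes $m_1,\dots,m_d\in\mathbb N$, the centered regular grid is $\Gamma_{m_1,\dots,m_d}=\{(\frac{2\ell_1+1}{2m_1},\dots,\frac{2\ell_d+1}{2m_d}) : \ell_j\in\{0,1,\dots,m_j-1\}\text{ for } j=1,\dots,d\}$, an $N$-point set with $N=m_1\cdots m_d$. For an $N$-point set $\mathcal P_d\subset[0,1)^d$ with real coefficients $\mathcal A(\mathcal P_d)=\{a_{\boldsymbol x}:\boldsymbol x\in\mathcal P_d\}$, the local discrepancy is $\Delta_{\mathcal P_d,\mathcal A(\mathcal P_d)}(\boldsymbol\alpha)=\sum_{\boldsymbol x\in\mathcal P_d}a_{\boldsymbol x}\mathbf 1_{[\boldsymbol 0,\boldsymbol\alpha)}(\boldsymbol x)-\prod_{j=1}^d\alpha_j$ for $\boldsymbol\alpha=(\alpha_1,\dots,\alpha_d)\in[0,1]^d$,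 where $[\boldsymbol 0,\boldsymbol\alpha)=[0,\alpha_1)\times\cdots\times[0,\alpha_d)$. Given weights $\gamma_{\mathfrak u}\in[0,1]$ for $\emptyset\ne\mathfrak u\subseteq[d]$, the $\boldsymbol\gamma$-weighted star discrepancy is $D^*_{N,\boldsymbol\gamma}(\mathcal P_d,\mathcal A(\mathcal P_d))=\sup_{\boldsymbol\alpha\in[0,1]^d}\max_{\emptyset\ne\mathfrak u\subseteq[d]}\gamma_{\mathfrak u}|\Delta_{\mathcal P_d,\mathcal A(\mathcal P_d)}((\boldsymbol\alpha_{\mathfrak u},\boldsymbol 1))|$, where $(\boldsymbol\alpha_{\mathfrak u},\boldsymbol 1)=(y_1,\dots,y_d)$ with $y_j=\alpha_j$ for $j\in\mathfrak u$ and $y_j=1$ otherwise. For $\varepsilon\in(0,1)$ and $d\in\mathbb N$ define $N_{\boldsymbol\gamma}(\varepsilon,d)=\min\{N\in\mathbb N: N=m_1\cdots m_d \text{ for some } m_1,\dots,m_d\in\mathbb N \text{ and there exist coefficients } \mathcal A(\Gamma_{m_1,\dots,m_d}) \text{ with } D^*_{N,\boldsymbol\gamma}(\Gamma_{m_1,\dots,m_d},\mathcal A(\Gamma_{m_1,\dots,m_d}))\le\varepsilon\}$. The centered regular grid with different mesh-sizes achieves WT if $\lim_{\varepsilon^{-1}+d\to\infty}\frac{\log N_{\boldsymbol\gamma}(\varepsilon,d)}{\varepsilon^{-1}+d}=0$, and UWT if $\lim_{\varepsilon^{-1}+d\to\infty}\frac{\log N_{\boldsymbol\gamma}(\varepsilon,d)}{\varepsilon^{-t_1}+d^{t_2}}=0$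 for all $t_1,t_2\in(0,1]$. *)

theory Defs
  imports Complex_Main
begin

text \<open>Points of [0,1)^d are represented as functions nat \<Rightarrow> real, coordinates
  indexed by 1..d, and coordinate value 0 outside {1..d}.\<close>

definition centered_grid :: "nat \<Rightarrow> (nat \<Rightarrow> nat) \<Rightarrow> (nat \<Rightarrow> real) set" where
  "centered_grid d m = {x. \<exists>l::nat \<Rightarrow> nat.
       (\<forall>j\<in>{1..d}. l j < m j \<and> x j = (2 * real (l j) + 1) / (2 * real (m j)))
     \<and> (\<forall>j. j \<notin> {1..d} \<longrightarrow> x j = 0)}"

definition local_disc ::
  "nat \<Rightarrow> (nat \<Rightarrow> real) set \<Rightarrow> ((nat \<Rightarrow> real) \<Rightarrow> real) \<Rightarrow> (nat \<Rightarrow> real) \<Rightarrow> real" where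
  "local_disc d P a \<alpha> =
     (\<Sum>x\<in>P. a x * (if (\<forall>j\<in>{1..d}. 0 \<le> x j \<and> x j < \<alpha> j) then 1 else 0))
     - (\<Prod>j\<in>{1..d}. \<alpha> j)"

definition proj_one :: "nat set \<Rightarrow> (nat \<Rightarrow> real) \<Rightarrow> (nat \<Rightarrow> real)" where
  "proj_one u \<alpha> = (\<lambda>j. if j \<in> u then \<alpha> j else 1)"

definition weighted_star_disc ::
  "(nat set \<Rightarrow> real) \<Rightarrow> nat \<Rightarrow> (nat \<Rightarrow> real) set \<Rightarrow> ((nat \<Rightarrow> real) \<Rightarrow> real) \<Rightarrow> real" where
  "weighted_star_disc W d P a =
     Sup {W u * \<bar>local_disc d P a (proj_one u \<alpha>)\<bar> | u \<alpha>.
            u \<noteq> {} \<and> u \<subseteq> {1..d} \<and> (\<forall>j\<in>{1..d}. 0 \<le> \<alpha> j \<and> \<alpha> j \<le> 1)}"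

definition N_grid :: "(nat set \<Rightarrow> real) \<Rightarrow> real \<Rightarrow> nat \<Rightarrow> nat" where
  "N_grid W \<epsilon> d = (LEAST N. N \<ge> 1 \<and> (\<exists>m::nat \<Rightarrow> nat.
       (\<forall>j\<in>{1..d}. m j \<ge> 1) \<and> N = (\<Prod>j\<in>{1..d}. m j) \<and>
       (\<exists>a. weighted_star_disc W d (centered_grid d m) a \<le> \<epsilon>)))"

definition grid_WT :: "(nat set \<Rightarrow> real) \<Rightarrow> bool" where
  "grid_WT W \<longleftrightarrow> (\<forall>\<delta>>0. \<exists>K. \<forall>\<epsilon> d. 0 < \<epsilon> \<and> \<epsilon> < 1 \<and> d \<ge> 1 \<and> 1 / \<epsilon> + real d > K \<longrightarrow>
       \<bar>ln (real (N_grid W \<epsilon> d)) / (1 / \<epsilon> + real d)\<bar> \<le> \<delta>)"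

definition grid_UWT :: "(nat set \<Rightarrow> real) \<Rightarrow> bool" where
  "grid_UWT W \<longleftrightarrow> (\<forall>t1 t2. 0 < t1 \<and> t1 \<le> 1 \<and> 0 < t2 \<and> t2 \<le> 1 \<longrightarrow>
     (\<forall>\<delta>>0. \<exists>K. \<forall>\<epsilon> d. 0 < \<epsilon> \<and> \<epsilon> < 1 \<and> d \<ge> 1 \<and>
        (1 / \<epsilon>) powr t1 + real d powr t2 > K \<longrightarrow>
       \<bar>ln (real (N_grid W \<epsilon> d)) / ((1 / \<epsilon>) powr t1 + real d powr t2)\<bar> \<le> \<delta>))"

definition product_weights :: "(nat \<Rightarrow> real) \<Rightarrow> nat set \<Rightarrow> real" where
  "product_weights \<gamma> u = (\<Prod>j\<in>u. \<gamma> j)"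

end

(*
  Upper bound: with equal coefficients 1/N, the
  grid with m_j = max 1 (ceil (C gamma_j / (2 eps))) has weighted discrepancy at most eps, where C
  bounds the sums over j in u of gamma_(u - {j}) (finite as soon as gamma_j <= 1/2 eventually).
  Hence ln N(eps, d) <= sum_j ln (1 + C gamma_j / (2 eps)), uniformly in d.  If j gamma_j <= eta
  for j >= j0, only O(eta / eps) terms are nonzero and ln (1 + x) <= 2 sqrt x makes the sum
  O(sqrt (1/eps) + eta / eps); if j^n gamma_j -> 0, the sum is O(eps^(-2/n)).
  Lower bound: the box of side 1/(2 m_j) in coordinate j contains no grid point, so
  gamma_j / (2 m_j) <= eps and gamma_j > 2 eps forces m_j >= 2.  If j^n gamma_j >= r for infinitely many j, monotonicity gives
  N(r / (4 j^n), j) >= 2^j, which is not o(eps^(-1/n) + j).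
*)

theory Submission
  imports Defs "HOL-Library.FuncSet"
begin

definition grid_indices_below :: "nat \<Rightarrow> real \<Rightarrow> nat set" where
  "grid_indices_below m \<beta> = {l. l < m \<and> (2 * real l + 1) / (2 * real m) < \<beta>}"

lemma grid_indices_below_eq_lessThan:
  assumes "1 \<le> m"
  shows "grid_indices_below m \<beta> = {..<min m (nat \<lceil>real m * \<beta> - 1/2\<rceil>)}"
proof -
  have "real m > 0" using assms by simp
  then have "(2 * real l + 1) / (2 * real m) < \<beta> \<longleftrightarrow> real l < real m * \<beta> - 1/2" for l
    by (simp add: field_simps)
  moreover have "l < nat \<lceil>r\<rceil> \<longleftrightarrow> real l < r" for l and r :: real
    by (simp add: zless_nat_eq_int_zless less_ceiling_iff)
  ultimately show ?thesis unfolding grid_indices_below_def by (simp add: set_eq_iff)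
qed

lemma card_grid_indices_below:
  assumes m: "1 \<le> m" and "0 \<le> \<beta>" "\<beta> \<le> 1"
  shows "\<bar>real (card (grid_indices_below m \<beta>)) / real m - \<beta>\<bar> \<le> 1 / (2 * real m)"
proof -
  define y where "y = real m * \<beta> - 1/2"
  have mpos: "real m > 0" using m by simp
  have y: "- 1/2 \<le> y" "y \<le> real m - 1/2"
    using assms mpos unfolding y_def by (auto simp: mult_left_le)
  have "card (grid_indices_below m \<beta>) = min m (nat \<lceil>y\<rceil>)"
    unfolding y_def grid_indices_below_eq_lessThan[OF m] by simp
  then have "\<bar>real (card (grid_indices_below m \<beta>)) - real m * \<beta>\<bar> \<le> 1/2"
    using y unfolding y_def by linarith
  then have "\<bar>real (card (grid_indices_below m \<beta>)) - real m * \<beta>\<bar> / real m \<le> (1/2) / real m"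
    using mpos by (intro divide_right_mono) auto
  moreover have "real (card (grid_indices_below m \<beta>)) / real m - \<beta>
      = (real (card (grid_indices_below m \<beta>)) - real m * \<beta>) / real m"
    using mpos by (simp add: field_simps)
  ultimately show ?thesis by simp
qed

lemma grid_indices_below_one: "grid_indices_below m 1 = {..<m}"
  unfolding grid_indices_below_def by (auto simp: divide_less_eq)

definition grid_point :: "nat \<Rightarrow> (nat \<Rightarrow> nat) \<Rightarrow> (nat \<Rightarrow> nat) \<Rightarrow> nat \<Rightarrow> real" where
  "grid_point d m l = (\<lambda>j. if j \<in> {1..d} then (2 * real (l j) + 1) / (2 * real (m j)) else 0)"

lemma inj_on_grid_point:
  assumes "\<forall>j\<in>{1..d}. 1 \<le> m j"
  shows "inj_on (grid_point d m) (PiE {1..d} T)"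
proof (rule inj_onI)
  fix l l' assume l: "l \<in> PiE {1..d} T" and l': "l' \<in> PiE {1..d} T"
    and eq: "grid_point d m l = grid_point d m l'"
  show "l = l'"
  proof (rule PiE_ext[OF l l'])
    fix j assume j: "j \<in> {1..d}"
    then have "real (m j) > 0" using assms by force
    then show "l j = l' j" using fun_cong[OF eq, of j] j unfolding grid_point_def by simp
  qed
qed

lemma centered_grid_eq_image: "centered_grid d m = grid_point d m ` PiE {1..d} (\<lambda>j. {..<m j})"
proof (intro set_eqI iffI)
  fix x assume "x \<in> centered_grid d m"
  then obtain l where l: "\<forall>j\<in>{1..d}. l j < m j \<and> x j = (2 * real (l j) + 1) / (2 * real (m j))"
    "\<forall>j. j \<notin> {1..d} \<longrightarrow> x j = 0" unfolding centered_grid_def by blast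
  then have "x = grid_point d m (restrict l {1..d})" "restrict l {1..d} \<in> PiE {1..d} (\<lambda>j. {..<m j})"
    unfolding grid_point_def by auto
  then show "x \<in> grid_point d m ` PiE {1..d} (\<lambda>j. {..<m j})" by blast
next
  fix x assume "x \<in> grid_point d m ` PiE {1..d} (\<lambda>j. {..<m j})"
  then obtain l where "l \<in> PiE {1..d} (\<lambda>j. {..<m j})" "x = grid_point d m l" by blast
  then show "x \<in> centered_grid d m" unfolding centered_grid_def grid_point_def
    by (intro CollectI exI[of _ l]) auto
qed

lemma finite_centered_grid: "finite (centered_grid d m)"
  unfolding centered_grid_eq_image by (intro finite_imageI finite_PiE) auto

lemma card_centered_grid_box:
  assumes m: "\<forall>j\<in>{1..d}. 1 \<le> m j"
  shows "card {x \<in> centered_grid d m. \<forall>j\<in>{1..d}. 0 \<le> x j \<and> x j < \<beta> j}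
       = (\<Prod>j\<in>{1..d}. card (grid_indices_below (m j) (\<beta> j)))"
proof -
  let ?S = "\<lambda>j. grid_indices_below (m j) (\<beta> j)"
  have "{x \<in> centered_grid d m. \<forall>j\<in>{1..d}. 0 \<le> x j \<and> x j < \<beta> j} = grid_point d m ` PiE {1..d} ?S"
    unfolding centered_grid_eq_image grid_indices_below_def grid_point_def
    by (auto simp: PiE_iff image_iff)
  moreover have "inj_on (grid_point d m) (PiE {1..d} ?S)"
    by (rule inj_on_grid_point[OF m])
  ultimately show ?thesis by (simp add: card_image card_PiE)
qed

lemma local_disc_const_coeffs:
  assumes "finite P"
  shows "local_disc d P (\<lambda>_. c) \<beta>
       = c * real (card {x \<in> P. \<forall>j\<in>{1..d}. 0 \<le> x j \<and> x j < \<beta> j}) - (\<Prod>j\<in>{1..d}. \<beta> j)"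
  using assms by (simp add: local_disc_def sum.If_cases Int_def flip: sum_distrib_left)

lemma prod_proj_one: "(\<Prod>j\<in>{1..d}. proj_one u \<alpha> j) = (\<Prod>j\<in>u \<inter> {1..d}. \<alpha> j)"
  unfolding proj_one_def by (simp add: prod.If_cases Int_commute)

definition leave_one_out_sum :: "(nat \<Rightarrow> real) \<Rightarrow> nat set \<Rightarrow> real" where
  "leave_one_out_sum \<gamma> u = (\<Sum>j\<in>u. prod \<gamma> (u - {j}))"

lemma leave_one_out_sum_le_card:
  assumes "\<forall>j\<in>u. 0 \<le> \<gamma> j \<and> \<gamma> j \<le> 1"
  shows "leave_one_out_sum \<gamma> u \<le> real (card u)"
proof -
  have "leave_one_out_sum \<gamma> u \<le> (\<Sum>j\<in>u. 1)"
    unfolding leave_one_out_sum_def using assms by (intro sum_mono prod_le_1) auto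
  then show ?thesis by simp
qed

lemma two_pow_card_mult_prod_le:
  fixes \<gamma> :: "nat \<Rightarrow> real"
  assumes "finite u" "\<forall>j\<in>u. 0 \<le> \<gamma> j \<and> \<gamma> j \<le> 1" "\<forall>j\<in>u. q \<le> j \<longrightarrow> \<gamma> j \<le> 1/2"
  shows "2 ^ card u * prod \<gamma> u \<le> 2 ^ card (u \<inter> {..<q})"
  using assms
proof (induction u rule: finite_induct)
  case (insert x F)
  have IH: "2 ^ card F * prod \<gamma> F \<le> (2::real) ^ card (F \<inter> {..<q})" and nonneg: "0 \<le> prod \<gamma> F"
    using insert by (auto intro: prod_nonneg)
  then have "2 ^ card (insert x F) * prod \<gamma> (insert x F) = (2 * \<gamma> x) * (2 ^ card F * prod \<gamma> F)"
    using insert by (simp add: algebra_simps)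
  also have "\<dots> \<le> (if q \<le> x then 1 else 2) * 2 ^ card (F \<inter> {..<q})"
    using insert IH nonneg by (intro mult_mono) auto
  also have "\<dots> = 2 ^ card (insert x F \<inter> {..<q})"
    using insert by (auto simp: Int_insert_left)
  finally show ?case .
qed simp

lemma leave_one_out_sum_le_pow2:
  fixes \<gamma> :: "nat \<Rightarrow> real"
  assumes u: "finite u" and \<gamma>: "\<forall>j\<in>u. 0 \<le> \<gamma> j \<and> \<gamma> j \<le> 1" "\<forall>j\<in>u. q \<le> j \<longrightarrow> \<gamma> j \<le> 1/2"
  shows "leave_one_out_sum \<gamma> u \<le> 2 ^ (q + 1)"
proof (cases "u = {}")
  case False
  define s where "s = card u"
  have s: "s = Suc (s - 1)" using False u unfolding s_def by (simp add: card_gt_0_iff)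
  have each: "prod \<gamma> (u - {j}) \<le> 2 ^ q / 2 ^ (s - 1)" if j: "j \<in> u" for j
  proof -
    have "2 ^ card (u - {j}) * prod \<gamma> (u - {j}) \<le> (2::real) ^ card ((u - {j}) \<inter> {..<q})"
      using u \<gamma> by (intro two_pow_card_mult_prod_le) auto
    also have "\<dots> \<le> 2 ^ q"
      by (intro power_increasing) (auto intro: order_trans[OF card_mono card_lessThan[THEN eq_imp_le]])
    finally show ?thesis using j u unfolding s_def by (simp add: field_simps)
  qed
  have "leave_one_out_sum \<gamma> u \<le> (\<Sum>j\<in>u. 2 ^ q / 2 ^ (s - 1))"
    unfolding leave_one_out_sum_def using each by (intro sum_mono) auto
  also have "\<dots> = 2 ^ (q + 1) * (real s / 2 ^ s)"
    by (subst (3) s) (simp add: s_def field_simps)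
  also have "\<dots> \<le> 2 ^ (q + 1)"
    using of_nat_less_two_power[of s] by (simp add: divide_le_eq)
  finally show ?thesis .
qed (simp add: leave_one_out_sum_def)

lemma product_weights_bounds:
  assumes "\<forall>i\<ge>1. 0 \<le> \<gamma> i \<and> \<gamma> i \<le> 1"
  shows "\<forall>u\<subseteq>{1..d}. 0 \<le> product_weights \<gamma> u \<and> product_weights \<gamma> u \<le> 1"
  unfolding product_weights_def using assms by (force intro: prod_nonneg prod_le_1)

lemma weighted_local_disc_le_weighted_star_disc:
  assumes W: "\<forall>u\<subseteq>{1..d}. 0 \<le> W u \<and> W u \<le> 1" and P: "finite P"
    and u: "u \<noteq> {}" "u \<subseteq> {1..d}" and \<alpha>: "\<forall>j\<in>{1..d}. 0 \<le> \<alpha> j \<and> \<alpha> j \<le> 1"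
  shows "W u * \<bar>local_disc d P a (proj_one u \<alpha>)\<bar> \<le> weighted_star_disc W d P a"
  unfolding weighted_star_disc_def
proof (rule cSup_upper)
  show "bdd_above {W u * \<bar>local_disc d P a (proj_one u \<alpha>)\<bar> | u \<alpha>.
      u \<noteq> {} \<and> u \<subseteq> {1..d} \<and> (\<forall>j\<in>{1..d}. 0 \<le> \<alpha> j \<and> \<alpha> j \<le> 1)}"
  proof (rule bdd_aboveI, clarify)
    fix u and \<alpha> :: "nat \<Rightarrow> real"
    assume u: "u \<subseteq> {1..d}" and \<alpha>: "\<forall>j\<in>{1..d}. 0 \<le> \<alpha> j \<and> \<alpha> j \<le> 1"
    have "0 \<le> (\<Prod>j\<in>{1..d}. proj_one u \<alpha> j)" "(\<Prod>j\<in>{1..d}. proj_one u \<alpha> j) \<le> 1"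
      unfolding prod_proj_one using \<alpha> by (auto intro!: prod_nonneg prod_le_1)
    moreover have "\<bar>\<Sum>x\<in>P. a x * (if \<forall>j\<in>{1..d}. 0 \<le> x j \<and> x j < proj_one u \<alpha> j then 1 else 0)\<bar>
        \<le> (\<Sum>x\<in>P. \<bar>a x\<bar>)"
      by (rule order_trans[OF sum_abs sum_mono]) auto
    ultimately have "\<bar>local_disc d P a (proj_one u \<alpha>)\<bar> \<le> (\<Sum>x\<in>P. \<bar>a x\<bar>) + 1"
      unfolding local_disc_def by linarith
    then show "W u * \<bar>local_disc d P a (proj_one u \<alpha>)\<bar> \<le> (\<Sum>x\<in>P. \<bar>a x\<bar>) + 1"
      using W u by (meson abs_ge_zero mult_left_le_one_le order_trans)
  qed
qed (use u \<alpha> in blast)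

lemma weighted_star_disc_leI:
  assumes "1 \<le> d"
    and "\<And>u \<alpha>. u \<noteq> {} \<Longrightarrow> u \<subseteq> {1..d} \<Longrightarrow> \<forall>j\<in>{1..d}. 0 \<le> \<alpha> j \<and> \<alpha> j \<le> 1 \<Longrightarrow>
      W u * \<bar>local_disc d P a (proj_one u \<alpha>)\<bar> \<le> \<epsilon>"
  shows "weighted_star_disc W d P a \<le> \<epsilon>"
  unfolding weighted_star_disc_def
  by (rule cSup_least) (use assms in \<open>auto intro!: exI[of _ "{1}"] exI[of _ "\<lambda>_. 0"]\<close>)

lemma coordinate_gap_le_weighted_star_disc:
  assumes \<gamma>: "\<forall>i\<ge>1. 0 \<le> \<gamma> i \<and> \<gamma> i \<le> 1" and m: "\<forall>i\<in>{1..d}. 1 \<le> m i" and j: "j \<in> {1..d}"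
  shows "\<gamma> j / (2 * real (m j)) \<le> weighted_star_disc (product_weights \<gamma>) d (centered_grid d m) a"
proof -
  define \<alpha> where "\<alpha> = (\<lambda>i::nat. 1 / (2 * real (m j)))"
  have mj: "1 \<le> real (m j)" using m j by auto
  have empty: "\<not> (\<forall>i\<in>{1..d}. 0 \<le> x i \<and> x i < proj_one {j} \<alpha> i)" if x: "x \<in> centered_grid d m" for x
  proof -
    obtain l where "x j = (2 * real (l j) + 1) / (2 * real (m j))"
      using x j unfolding centered_grid_def by blast
    then have "1 / (2 * real (m j)) \<le> x j" using mj by (simp add: divide_right_mono)
    then show ?thesis using j unfolding proj_one_def \<alpha>_def by auto
  qed
  have "(\<Sum>x\<in>centered_grid d m. a x * (if \<forall>i\<in>{1..d}. 0 \<le> x i \<and> x i < proj_one {j} \<alpha> i then 1 else 0)) = 0"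
    by (intro sum.neutral ballI) (simp only: empty if_False mult_zero_right)
  then have "local_disc d (centered_grid d m) a (proj_one {j} \<alpha>) = - (1 / (2 * real (m j)))"
    unfolding local_disc_def prod_proj_one using j by (simp add: \<alpha>_def)
  then have "\<gamma> j / (2 * real (m j))
      = product_weights \<gamma> {j} * \<bar>local_disc d (centered_grid d m) a (proj_one {j} \<alpha>)\<bar>"
    unfolding product_weights_def using mj by simp
  also have "\<dots> \<le> weighted_star_disc (product_weights \<gamma>) d (centered_grid d m) a"
    using j mj by (intro weighted_local_disc_le_weighted_star_disc product_weights_bounds[OF \<gamma>]
        finite_centered_grid) (auto simp: \<alpha>_def)
  finally show ?thesis .
qed

lemma abs_local_disc_centered_grid_le:
  assumes m: "\<forall>j\<in>{1..d}. 1 \<le> m j" and \<beta>: "\<forall>j\<in>{1..d}. 0 \<le> \<beta> j \<and> \<beta> j \<le> 1"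
  shows "\<bar>local_disc d (centered_grid d m) (\<lambda>_. 1 / real (\<Prod>j\<in>{1..d}. m j)) \<beta>\<bar>
       \<le> (\<Sum>j\<in>{j\<in>{1..d}. \<beta> j \<noteq> 1}. 1 / (2 * real (m j)))"
proof -
  define c where "c j = real (card (grid_indices_below (m j) (\<beta> j))) / real (m j)" for j
  have "card (grid_indices_below (m j) (\<beta> j)) \<le> m j" for j
    unfolding grid_indices_below_def
    by (rule order_trans[OF card_mono card_lessThan[THEN eq_imp_le]]) auto
  then have c: "0 \<le> c j \<and> c j \<le> 1" for j
    unfolding c_def by (cases "m j = 0") (auto simp: divide_le_eq)
  have "local_disc d (centered_grid d m) (\<lambda>_. 1 / real (\<Prod>j\<in>{1..d}. m j)) \<beta>
      = (\<Prod>j\<in>{1..d}. c j) - (\<Prod>j\<in>{1..d}. \<beta> j)"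
    unfolding local_disc_const_coeffs[OF finite_centered_grid] card_centered_grid_box[OF m] c_def
    by (simp add: prod_dividef)
  then have "\<bar>local_disc d (centered_grid d m) (\<lambda>_. 1 / real (\<Prod>j\<in>{1..d}. m j)) \<beta>\<bar>
      \<le> (\<Sum>j\<in>{1..d}. \<bar>c j - \<beta> j\<bar>)"
    using norm_prod_diff[of "{1..d}" c \<beta>] c \<beta> by simp
  also have "\<dots> \<le> (\<Sum>j\<in>{1..d}. if \<beta> j = 1 then 0 else 1 / (2 * real (m j)))"
  proof (intro sum_mono)
    fix j assume j: "j \<in> {1..d}"
    then have "c j = 1" if "\<beta> j = 1" using m that by (force simp: c_def grid_indices_below_one)
    then show "\<bar>c j - \<beta> j\<bar> \<le> (if \<beta> j = 1 then 0 else 1 / (2 * real (m j)))"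
      using card_grid_indices_below[of "m j" "\<beta> j"] m \<beta> j by (simp add: c_def)
  qed
  also have "\<dots> = (\<Sum>j\<in>{j\<in>{1..d}. \<beta> j \<noteq> 1}. 1 / (2 * real (m j)))"
    by (simp add: sum.If_cases Int_def conj_commute)
  finally show ?thesis .
qed

text \<open>Coordinate \<open>j\<close> of the grid contributes at most \<open>\<gamma>\<^sub>j / (2 m\<^sub>j)\<close> to the weighted
  discrepancy; this choice of \<open>m\<^sub>j\<close> makes that at most \<open>\<epsilon> / C\<close>.\<close>

definition mesh_size :: "real \<Rightarrow> (nat \<Rightarrow> real) \<Rightarrow> real \<Rightarrow> nat \<Rightarrow> nat" where
  "mesh_size C \<gamma> \<epsilon> j = max 1 (nat \<lceil>C * \<gamma> j / (2 * \<epsilon>)\<rceil>)"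

lemma mesh_size_ge_1: "1 \<le> mesh_size C \<gamma> \<epsilon> j"
  unfolding mesh_size_def by simp

lemma mesh_size_pos: "0 < mesh_size C \<gamma> \<epsilon> j"
  unfolding mesh_size_def by simp

lemma mesh_size_le:
  assumes "0 \<le> C * \<gamma> j / (2 * \<epsilon>)"
  shows "real (mesh_size C \<gamma> \<epsilon> j) \<le> 1 + C * \<gamma> j / (2 * \<epsilon>)"
  using assms unfolding mesh_size_def by linarith

lemma mesh_size_eq_1:
  assumes "0 < \<epsilon>" "C * \<gamma> j \<le> 2 * \<epsilon>"
  shows "mesh_size C \<gamma> \<epsilon> j = 1"
proof -
  have "C * \<gamma> j / (2 * \<epsilon>) \<le> 1" using assms by (simp add: divide_le_eq)
  then show ?thesis unfolding mesh_size_def by linarith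
qed

lemma weight_div_mesh_size_le:
  assumes "0 < C" "0 < \<epsilon>" "0 \<le> \<gamma> j"
  shows "\<gamma> j / (2 * real (mesh_size C \<gamma> \<epsilon> j)) \<le> \<epsilon> / C"
proof -
  have "C * \<gamma> j / (2 * \<epsilon>) \<le> real (mesh_size C \<gamma> \<epsilon> j)"
    unfolding mesh_size_def by linarith
  then have "C * \<gamma> j \<le> \<epsilon> * (2 * real (mesh_size C \<gamma> \<epsilon> j))"
    using assms by (simp add: divide_le_eq algebra_simps)
  then show ?thesis using assms mesh_size_ge_1[of C \<gamma> \<epsilon> j] by (simp add: field_simps)
qed

lemma weighted_star_disc_mesh_size_le:
  assumes \<gamma>: "\<forall>i\<ge>1. 0 \<le> \<gamma> i \<and> \<gamma> i \<le> 1"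
    and C: "0 < C" "\<forall>u\<subseteq>{1..d}. leave_one_out_sum \<gamma> u \<le> C" and \<epsilon>: "0 < \<epsilon>" and d: "1 \<le> d"
  shows "weighted_star_disc (product_weights \<gamma>) d (centered_grid d (mesh_size C \<gamma> \<epsilon>))
           (\<lambda>_. 1 / real (\<Prod>j\<in>{1..d}. mesh_size C \<gamma> \<epsilon> j)) \<le> \<epsilon>"
proof (rule weighted_star_disc_leI[OF d])
  fix u and \<alpha> :: "nat \<Rightarrow> real"
  assume u: "u \<noteq> {}" "u \<subseteq> {1..d}" and \<alpha>: "\<forall>j\<in>{1..d}. 0 \<le> \<alpha> j \<and> \<alpha> j \<le> 1"
  let ?m = "mesh_size C \<gamma> \<epsilon>"
  let ?D = "local_disc d (centered_grid d ?m) (\<lambda>_. 1 / real (\<Prod>j\<in>{1..d}. ?m j)) (proj_one u \<alpha>)"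
  have fin: "finite u" using u finite_subset by blast
  have "\<bar>?D\<bar> \<le> (\<Sum>j\<in>{j\<in>{1..d}. proj_one u \<alpha> j \<noteq> 1}. 1 / (2 * real (?m j)))"
    using \<alpha> mesh_size_ge_1 by (intro abs_local_disc_centered_grid_le) (auto simp: proj_one_def)
  also have "\<dots> \<le> (\<Sum>j\<in>u. 1 / (2 * real (?m j)))"
    using fin by (intro sum_mono2) (auto simp: proj_one_def)
  finally have "product_weights \<gamma> u * \<bar>?D\<bar> \<le> prod \<gamma> u * (\<Sum>j\<in>u. 1 / (2 * real (?m j)))"
    unfolding product_weights_def using u \<gamma> by (intro mult_left_mono) (auto intro!: prod_nonneg)
  also have "\<dots> = (\<Sum>j\<in>u. \<gamma> j / (2 * real (?m j)) * prod \<gamma> (u - {j}))"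
    unfolding sum_distrib_left by (intro sum.cong refl) (simp add: prod.remove[OF fin])
  also have "\<dots> \<le> (\<Sum>j\<in>u. \<epsilon> / C * prod \<gamma> (u - {j}))"
    using u \<gamma> C \<epsilon> by (intro sum_mono mult_right_mono weight_div_mesh_size_le prod_nonneg) auto
  also have "\<dots> = \<epsilon> / C * leave_one_out_sum \<gamma> u"
    by (simp add: leave_one_out_sum_def sum_distrib_left)
  also have "\<dots> \<le> \<epsilon> / C * C"
    using C \<epsilon> u by (intro mult_left_mono) auto
  finally show "product_weights \<gamma> u * \<bar>?D\<bar> \<le> \<epsilon>" using C by simp
qed

lemma N_grid_le_prod:
  assumes "\<forall>j\<in>{1..d}. 1 \<le> m j" "weighted_star_disc W d (centered_grid d m) a \<le> \<epsilon>"
  shows "N_grid W \<epsilon> d \<le> (\<Prod>j\<in>{1..d}. m j)"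
  unfolding N_grid_def by (rule Least_le) (use assms prod_ge_1[of "{1..d}" m] in auto)

lemma N_grid_attained:
  assumes "\<forall>j\<in>{1..d}. 1 \<le> m j" "weighted_star_disc W d (centered_grid d m) a \<le> \<epsilon>"
  obtains m' a' where "\<forall>j\<in>{1..d}. 1 \<le> m' j" "N_grid W \<epsilon> d = (\<Prod>j\<in>{1..d}. m' j)"
    "weighted_star_disc W d (centered_grid d m') a' \<le> \<epsilon>"
proof -
  let ?P = "\<lambda>N. N \<ge> 1 \<and> (\<exists>m::nat \<Rightarrow> nat. (\<forall>j\<in>{1..d}. m j \<ge> 1) \<and> N = (\<Prod>j\<in>{1..d}. m j) \<and>
       (\<exists>a. weighted_star_disc W d (centered_grid d m) a \<le> \<epsilon>))"
  have "?P (\<Prod>j\<in>{1..d}. m j)" using assms prod_ge_1[of "{1..d}" m] by auto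
  then have "?P (N_grid W \<epsilon> d)" unfolding N_grid_def by (rule LeastI)
  then show ?thesis using that by blast
qed

lemma N_grid_product_weights_attained:
  assumes \<gamma>: "\<forall>i\<ge>1. 0 \<le> \<gamma> i \<and> \<gamma> i \<le> 1" and \<epsilon>: "0 < \<epsilon>" and d: "1 \<le> d"
  obtains m a where "\<forall>j\<in>{1..d}. 1 \<le> m j" "N_grid (product_weights \<gamma>) \<epsilon> d = (\<Prod>j\<in>{1..d}. m j)"
    "weighted_star_disc (product_weights \<gamma>) d (centered_grid d m) a \<le> \<epsilon>"
proof (rule N_grid_attained)
  have "leave_one_out_sum \<gamma> u \<le> real d" if "u \<subseteq> {1..d}" for u
    using leave_one_out_sum_le_card[of u \<gamma>] card_mono[OF _ that] \<gamma> that by force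
  then show "weighted_star_disc (product_weights \<gamma>) d (centered_grid d (mesh_size (real d) \<gamma> \<epsilon>))
      (\<lambda>_. 1 / real (\<Prod>j\<in>{1..d}. mesh_size (real d) \<gamma> \<epsilon> j)) \<le> \<epsilon>"
    using \<gamma> \<epsilon> d by (intro weighted_star_disc_mesh_size_le) auto
qed (use mesh_size_ge_1 that in auto)

lemma N_grid_ge_1:
  assumes "\<forall>i\<ge>1. 0 \<le> \<gamma> i \<and> \<gamma> i \<le> 1" "0 < \<epsilon>" "1 \<le> d"
  shows "1 \<le> N_grid (product_weights \<gamma>) \<epsilon> d"
proof -
  obtain m a where "\<forall>j\<in>{1..d}. 1 \<le> m j" "N_grid (product_weights \<gamma>) \<epsilon> d = (\<Prod>j\<in>{1..d}. m j)"
    using N_grid_product_weights_attained[OF assms] by blast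
  then show ?thesis using prod_ge_1[of "{1..d}" m] by auto
qed

lemma ln_N_grid_le_sum_ln_mesh_size:
  assumes \<gamma>: "\<forall>i\<ge>1. 0 \<le> \<gamma> i \<and> \<gamma> i \<le> 1"
    and C: "0 < C" "\<forall>u\<subseteq>{1..d}. leave_one_out_sum \<gamma> u \<le> C" and \<epsilon>: "0 < \<epsilon>" and d: "1 \<le> d"
  shows "ln (real (N_grid (product_weights \<gamma>) \<epsilon> d)) \<le> (\<Sum>j\<in>{1..d}. ln (real (mesh_size C \<gamma> \<epsilon> j)))"
proof -
  have "N_grid (product_weights \<gamma>) \<epsilon> d \<le> (\<Prod>j\<in>{1..d}. mesh_size C \<gamma> \<epsilon> j)"
    using mesh_size_ge_1 by (intro N_grid_le_prod[OF _ weighted_star_disc_mesh_size_le[OF assms]]) auto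
  then have "ln (real (N_grid (product_weights \<gamma>) \<epsilon> d)) \<le> ln (\<Prod>j\<in>{1..d}. real (mesh_size C \<gamma> \<epsilon> j))"
    using N_grid_ge_1[OF \<gamma> \<epsilon> d]
    by (subst ln_le_cancel_iff) (auto simp: mesh_size_pos simp flip: of_nat_prod)
  also have "\<dots> = (\<Sum>j\<in>{1..d}. ln (real (mesh_size C \<gamma> \<epsilon> j)))"
    by (intro ln_prod) (auto simp: mesh_size_pos)
  finally show ?thesis .
qed

lemma ln_N_grid_ge:
  assumes \<gamma>: "\<forall>i\<ge>1. 0 \<le> \<gamma> i \<and> \<gamma> i \<le> 1" and \<epsilon>: "0 < \<epsilon>" and d: "1 \<le> d"
    and large: "\<forall>j\<in>{1..d}. 2 * \<epsilon> < \<gamma> j"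
  shows "real d * ln 2 \<le> ln (real (N_grid (product_weights \<gamma>) \<epsilon> d))"
proof -
  obtain m a where m: "\<forall>j\<in>{1..d}. 1 \<le> m j" and N: "N_grid (product_weights \<gamma>) \<epsilon> d = (\<Prod>j\<in>{1..d}. m j)"
    and disc: "weighted_star_disc (product_weights \<gamma>) d (centered_grid d m) a \<le> \<epsilon>"
    using N_grid_product_weights_attained[OF \<gamma> \<epsilon> d] by blast
  have "2 \<le> m j" if j: "j \<in> {1..d}" for j
  proof (rule ccontr)
    assume "\<not> 2 \<le> m j"
    then have "m j = 1" using m j by force
    then show False
      using coordinate_gap_le_weighted_star_disc[OF \<gamma> m j, of a] disc large[rule_format, OF j] by simp
  qed
  then have "(\<Prod>j\<in>{1..d}. 2::nat) \<le> N_grid (product_weights \<gamma>) \<epsilon> d"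
    unfolding N by (intro prod_mono) auto
  then have "(2::real) ^ d \<le> real (N_grid (product_weights \<gamma>) \<epsilon> d)"
    by (simp flip: of_nat_le_iff)
  then have "ln ((2::real) ^ d) \<le> ln (real (N_grid (product_weights \<gamma>) \<epsilon> d))"
    using N_grid_ge_1[OF \<gamma> \<epsilon> d] by (subst ln_le_cancel_iff) auto
  then show ?thesis by (simp add: ln_realpow)
qed

lemma tractable_of_ln_bounds:
  fixes N :: "real \<Rightarrow> nat \<Rightarrow> nat"
  assumes pos: "\<And>\<epsilon> d. 0 < \<epsilon> \<Longrightarrow> 1 \<le> d \<Longrightarrow> 1 \<le> N \<epsilon> d"
    and small: "\<And>\<delta>. 0 < \<delta> \<Longrightarrow> \<exists>\<epsilon>0>0. \<forall>\<epsilon> d. 0 < \<epsilon> \<and> \<epsilon> < \<epsilon>0 \<and> \<epsilon> < 1 \<and> 1 \<le> d \<longrightarrow>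
         ln (real (N \<epsilon> d)) \<le> \<delta> * (1 / \<epsilon>) powr t1"
    and bounded: "\<And>\<epsilon>0. 0 < \<epsilon>0 \<Longrightarrow> \<exists>B. \<forall>\<epsilon> d. \<epsilon>0 \<le> \<epsilon> \<and> \<epsilon> < 1 \<and> 1 \<le> d \<longrightarrow> ln (real (N \<epsilon> d)) \<le> B"
  shows "\<forall>\<delta>>0. \<exists>K. \<forall>\<epsilon> d. 0 < \<epsilon> \<and> \<epsilon> < 1 \<and> d \<ge> 1 \<and> (1 / \<epsilon>) powr t1 + real d powr t2 > K \<longrightarrow>
           \<bar>ln (real (N \<epsilon> d)) / ((1 / \<epsilon>) powr t1 + real d powr t2)\<bar> \<le> \<delta>"
proof (intro allI impI)
  fix \<delta> :: real assume \<delta>: "0 < \<delta>"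
  obtain \<epsilon>0 where \<epsilon>0: "0 < \<epsilon>0" and below: "\<forall>\<epsilon> d. 0 < \<epsilon> \<and> \<epsilon> < \<epsilon>0 \<and> \<epsilon> < 1 \<and> 1 \<le> d \<longrightarrow>
      ln (real (N \<epsilon> d)) \<le> \<delta> * (1 / \<epsilon>) powr t1"
    using small[OF \<delta>] by blast
  obtain B where above: "\<forall>\<epsilon> d. \<epsilon>0 \<le> \<epsilon> \<and> \<epsilon> < 1 \<and> 1 \<le> d \<longrightarrow> ln (real (N \<epsilon> d)) \<le> B"
    using bounded[OF \<epsilon>0] by blast
  show "\<exists>K. \<forall>\<epsilon> d. 0 < \<epsilon> \<and> \<epsilon> < 1 \<and> d \<ge> 1 \<and> (1 / \<epsilon>) powr t1 + real d powr t2 > K \<longrightarrow>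
      \<bar>ln (real (N \<epsilon> d)) / ((1 / \<epsilon>) powr t1 + real d powr t2)\<bar> \<le> \<delta>"
  proof (intro exI[of _ "\<bar>B\<bar> / \<delta>"] allI impI)
    fix \<epsilon> :: real and d :: nat
    assume a: "0 < \<epsilon> \<and> \<epsilon> < 1 \<and> d \<ge> 1 \<and> (1 / \<epsilon>) powr t1 + real d powr t2 > \<bar>B\<bar> / \<delta>"
    define D where "D = (1 / \<epsilon>) powr t1 + real d powr t2"
    have D: "0 < D" unfolding D_def using a by (simp add: add_pos_pos)
    have "ln (real (N \<epsilon> d)) \<le> \<delta> * D"
    proof (cases "\<epsilon> < \<epsilon>0")
      case True
      then have "ln (real (N \<epsilon> d)) \<le> \<delta> * (1 / \<epsilon>) powr t1" using below a by blast
      also have "\<dots> \<le> \<delta> * D" unfolding D_def using \<delta> by (intro mult_left_mono) auto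
      finally show ?thesis .
    next
      case False
      then have "ln (real (N \<epsilon> d)) \<le> B" using above a by simp
      also have "\<dots> \<le> \<bar>B\<bar>" by simp
      also have "\<dots> \<le> \<delta> * D" using a \<delta> unfolding D_def by (simp add: field_simps)
      finally show ?thesis .
    qed
    moreover have "0 \<le> ln (real (N \<epsilon> d))" using pos a by simp
    ultimately show "\<bar>ln (real (N \<epsilon> d)) / ((1 / \<epsilon>) powr t1 + real d powr t2)\<bar> \<le> \<delta>"
      using D unfolding D_def[symmetric] by (simp add: divide_le_eq)
  qed
qed

lemma ln_one_plus_le_two_sqrt:
  fixes x :: real
  assumes "0 \<le> x"
  shows "ln (1 + x) \<le> 2 * sqrt x"
proof -
  have "1 + x \<le> (1 + sqrt x) ^ 2" using assms by (simp add: power2_eq_square algebra_simps)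
  then have "ln (1 + x) \<le> ln ((1 + sqrt x) ^ 2)" using assms by (subst ln_le_cancel_iff) auto
  also have "\<dots> = 2 * ln (1 + sqrt x)" by (simp add: ln_realpow)
  also have "\<dots> \<le> 2 * sqrt x" using ln_add_one_self_le_self[of "sqrt x"] assms by simp
  finally show ?thesis .
qed

lemma ln_le_mult_root:
  fixes z :: real
  assumes "0 < z" "1 \<le> k"
  shows "ln z \<le> real k * z powr (1 / real k)"
proof -
  have "ln (z powr (1 / real k)) \<le> z powr (1 / real k)" using assms by (intro ln_bound) simp
  then show ?thesis using assms by (simp add: ln_powr field_simps)
qed

lemma sum_inverse_sqrt_le: "(\<Sum>j\<in>{1..M}. 1 / sqrt (real j)) \<le> 2 * sqrt (real M)"
proof (induction M)
  case (Suc M)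
  define a where "a = sqrt (real M)"
  define b where "b = sqrt (real M + 1)"
  have b: "0 < b" "b * b = real M + 1" unfolding b_def by auto
  have "a * b \<le> real M + 1/2"
    using arith_geo_mean_sqrt[of "real M" "real M + 1"] unfolding a_def b_def
    by (simp add: real_sqrt_mult)
  then have "(2 * a + 1 / b) * b \<le> (2 * b) * b" using b by (simp add: algebra_simps)
  then have "2 * a + 1 / b \<le> 2 * b" using b by simp
  then show ?case using Suc unfolding a_def b_def by (simp add: add.commute)
qed simp

lemma sum_le_of_sqrt_decay:
  fixes f :: "nat \<Rightarrow> real"
  assumes A: "finite A" "\<And>j. j \<in> A \<Longrightarrow> 1 \<le> j" and P: "0 \<le> P"
    and f: "\<And>j. j \<in> A \<Longrightarrow> 0 \<le> f j" "\<And>j. j \<in> A \<Longrightarrow> f j \<le> 2 * sqrt (P / real j)"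
      "\<And>j. j \<in> A \<Longrightarrow> P < real j \<Longrightarrow> f j = 0"
  shows "sum f A \<le> 4 * P"
proof -
  define M where "M = nat \<lfloor>P\<rfloor>"
  have M: "real M \<le> P" "\<And>j. M < j \<Longrightarrow> P < real j" unfolding M_def using P by linarith+
  have vanish: "f j = 0" if "j \<in> A" "M < j" for j using f M that by blast
  have "sum f A = sum f (A \<inter> {1..M})"
    using A vanish by (intro sum.mono_neutral_right) (auto, meson not_le)
  also have "\<dots> \<le> (\<Sum>j\<in>A \<inter> {1..M}. 2 * sqrt P * (1 / sqrt (real j)))"
    using f by (intro sum_mono) (auto simp: real_sqrt_divide)
  also have "\<dots> \<le> (\<Sum>j\<in>{1..M}. 2 * sqrt P * (1 / sqrt (real j)))"
    using P by (intro sum_mono2) auto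
  also have "\<dots> \<le> 2 * sqrt P * (2 * sqrt (real M))"
    unfolding sum_distrib_left[symmetric] using P by (intro mult_left_mono sum_inverse_sqrt_le) auto
  also have "\<dots> \<le> 2 * sqrt P * (2 * sqrt P)"
    using M P by (intro mult_left_mono) auto
  also have "\<dots> = 4 * P" using P by (simp add: algebra_simps)
  finally show ?thesis .
qed

lemma ln_mesh_size_nonneg: "0 \<le> ln (real (mesh_size C \<gamma> \<epsilon> j))"
  using mesh_size_ge_1[of C \<gamma> \<epsilon> j] by simp

lemma ln_mesh_size_le:
  assumes "0 < C" "0 < \<epsilon>" "0 \<le> \<gamma> j"
  shows "ln (real (mesh_size C \<gamma> \<epsilon> j)) \<le> ln (1 + C * \<gamma> j / (2 * \<epsilon>))"
  using assms mesh_size_le[of C \<gamma> j \<epsilon>] mesh_size_pos[of C \<gamma> \<epsilon> j] by (subst ln_le_cancel_iff) auto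

lemma mult_two_sqrt_div_eq:
  fixes C \<epsilon> :: real
  assumes "0 < \<epsilon>"
  shows "\<epsilon> * (2 * sqrt (C / (2 * \<epsilon>))) = sqrt (2 * C * \<epsilon>)"
proof -
  have "(2 * \<epsilon>)\<^sup>2 * (C / (2 * \<epsilon>)) = 2 * C * \<epsilon>"
    using assms by (simp add: power2_eq_square field_simps)
  then have "sqrt (2 * C * \<epsilon>) = sqrt ((2 * \<epsilon>)\<^sup>2) * sqrt (C / (2 * \<epsilon>))"
    by (metis real_sqrt_mult)
  also have "sqrt ((2 * \<epsilon>)\<^sup>2) = 2 * \<epsilon>" by (rule real_sqrt_unique) (use assms in auto)
  finally show ?thesis by simp
qed

lemma sum_ln_mesh_size_le_of_linear_decay:
  assumes \<gamma>: "\<forall>i\<ge>1. 0 \<le> \<gamma> i \<and> \<gamma> i \<le> 1" and C: "0 < C" and \<epsilon>: "0 < \<epsilon>"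
    and \<eta>: "0 \<le> \<eta>" "\<forall>j\<ge>j0. real j * \<gamma> j \<le> \<eta>"
  shows "\<epsilon> * (\<Sum>j\<in>{1..d}. ln (real (mesh_size C \<gamma> \<epsilon> j))) \<le> real j0 * sqrt (2 * C * \<epsilon>) + 2 * C * \<eta>"
proof -
  define f where "f j = ln (real (mesh_size C \<gamma> \<epsilon> j))" for j
  define P where "P = C * \<eta> / (2 * \<epsilon>)"
  have f_le: "f j \<le> 2 * sqrt (C * \<gamma> j / (2 * \<epsilon>))" if "1 \<le> j" for j
    using ln_mesh_size_le[OF C \<epsilon>, of \<gamma> j] ln_one_plus_le_two_sqrt[of "C * \<gamma> j / (2 * \<epsilon>)"] \<gamma> that C \<epsilon>
    unfolding f_def by force
  have "sum f ({1..d} \<inter> {..<j0}) \<le> (\<Sum>j\<in>{1..d} \<inter> {..<j0}. 2 * sqrt (C / (2 * \<epsilon>)))"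
  proof (intro sum_mono order_trans[OF f_le])
    fix j assume "j \<in> {1..d} \<inter> {..<j0}"
    then show "2 * sqrt (C * \<gamma> j / (2 * \<epsilon>)) \<le> 2 * sqrt (C / (2 * \<epsilon>))" "1 \<le> j"
      using \<gamma> C \<epsilon> by (auto intro!: divide_right_mono mult_left_le)
  qed
  also have "\<dots> = real (card ({1..d} \<inter> {..<j0})) * (2 * sqrt (C / (2 * \<epsilon>)))" by simp
  also have "\<dots> \<le> real j0 * (2 * sqrt (C / (2 * \<epsilon>)))"
    using card_mono[of "{..<j0}" "{1..d} \<inter> {..<j0}"] C \<epsilon> by (intro mult_right_mono) auto
  finally have "\<epsilon> * sum f ({1..d} \<inter> {..<j0}) \<le> \<epsilon> * (real j0 * (2 * sqrt (C / (2 * \<epsilon>))))"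
    using \<epsilon> by (intro mult_left_mono) auto
  also have "\<dots> = real j0 * sqrt (2 * C * \<epsilon>)"
    by (metis mult.left_commute mult_two_sqrt_div_eq[OF \<epsilon>])
  finally have head: "\<epsilon> * sum f ({1..d} \<inter> {..<j0}) \<le> real j0 * sqrt (2 * C * \<epsilon>)" .
  have "sum f ({1..d} - {..<j0}) \<le> 4 * P"
  proof (rule sum_le_of_sqrt_decay)
    fix j assume j: "j \<in> {1..d} - {..<j0}"
    then have "C * \<gamma> j / (2 * \<epsilon>) \<le> C * (\<eta> / real j) / (2 * \<epsilon>)"
      using \<eta> C \<epsilon> by (intro divide_right_mono mult_left_mono) (auto simp: field_simps)
    then have small: "C * \<gamma> j / (2 * \<epsilon>) \<le> P / real j" unfolding P_def by (simp add: ac_simps)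
    then show "f j \<le> 2 * sqrt (P / real j)"
      using f_le[of j] j real_sqrt_le_mono[OF small] by force
    show "f j = 0" if "P < real j"
    proof -
      have "P / real j < 1" using that j by (simp add: divide_less_eq)
      then have "C * \<gamma> j / (2 * \<epsilon>) \<le> 1" using small by linarith
      then show "f j = 0" using \<epsilon> by (simp add: f_def mesh_size_eq_1 divide_le_eq)
    qed
  qed (use \<eta> C \<epsilon> in \<open>auto simp: f_def ln_mesh_size_nonneg P_def\<close>)
  then have tail: "\<epsilon> * sum f ({1..d} - {..<j0}) \<le> 2 * C * \<eta>"
    using \<epsilon> unfolding P_def by (simp add: field_simps)
  show ?thesis
    using head tail unfolding f_def[symmetric] sum.Int_Diff[OF finite_atLeastAtMost, of f _ _ "{..<j0}"]
    by (simp add: distrib_left)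
qed

lemma eps_ln_N_grid_le:
  assumes \<gamma>: "\<forall>i\<ge>1. 0 \<le> \<gamma> i \<and> \<gamma> i \<le> 1"
    and C: "0 < C" "\<forall>u\<subseteq>{1..d}. leave_one_out_sum \<gamma> u \<le> C" and \<epsilon>: "0 < \<epsilon>" and d: "1 \<le> d"
    and \<eta>: "0 \<le> \<eta>" "\<forall>j\<ge>j0. real j * \<gamma> j \<le> \<eta>"
  shows "\<epsilon> * ln (real (N_grid (product_weights \<gamma>) \<epsilon> d)) \<le> real j0 * sqrt (2 * C * \<epsilon>) + 2 * C * \<eta>"
proof -
  have "\<epsilon> * ln (real (N_grid (product_weights \<gamma>) \<epsilon> d)) \<le> \<epsilon> * (\<Sum>j\<in>{1..d}. ln (real (mesh_size C \<gamma> \<epsilon> j)))"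
    using ln_N_grid_le_sum_ln_mesh_size[OF \<gamma> C \<epsilon> d] \<epsilon> by (intro mult_left_mono) auto
  also have "\<dots> \<le> real j0 * sqrt (2 * C * \<epsilon>) + 2 * C * \<eta>"
    by (rule sum_ln_mesh_size_le_of_linear_decay[OF \<gamma> C(1) \<epsilon> \<eta>])
  finally show ?thesis .
qed

lemma eventually_le_of_LIMSEQ_zero:
  fixes g :: "nat \<Rightarrow> real"
  assumes "g \<longlonglongrightarrow> 0" "0 < \<eta>"
  obtains j0 where "\<forall>j\<ge>j0. g j \<le> \<eta>"
  using order_tendstoD(2)[OF assms] unfolding eventually_sequentially by (meson less_imp_le)

lemma ln_N_grid_bounded:
  assumes \<gamma>: "\<forall>i\<ge>1. 0 \<le> \<gamma> i \<and> \<gamma> i \<le> 1"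
    and C: "0 < C" "\<forall>d. \<forall>u\<subseteq>{1..d}. leave_one_out_sum \<gamma> u \<le> C"
    and lim: "(\<lambda>j. real j * \<gamma> j) \<longlonglongrightarrow> 0" and \<epsilon>0: "0 < \<epsilon>0"
  shows "\<exists>B. \<forall>\<epsilon> d. \<epsilon>0 \<le> \<epsilon> \<and> \<epsilon> < 1 \<and> 1 \<le> d \<longrightarrow> ln (real (N_grid (product_weights \<gamma>) \<epsilon> d)) \<le> B"
proof -
  obtain j0 where j0: "\<forall>j\<ge>j0. real j * \<gamma> j \<le> 1"
    using eventually_le_of_LIMSEQ_zero[OF lim zero_less_one] .
  define X where "X = real j0 * sqrt (2 * C) + 2 * C"
  have X: "0 \<le> X" unfolding X_def using C by simp
  show ?thesis
  proof (intro exI[of _ "X / \<epsilon>0"] allI impI)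
    fix \<epsilon> :: real and d :: nat assume a: "\<epsilon>0 \<le> \<epsilon> \<and> \<epsilon> < 1 \<and> 1 \<le> d"
    then have \<epsilon>: "0 < \<epsilon>" using \<epsilon>0 by simp
    have "\<epsilon> * ln (real (N_grid (product_weights \<gamma>) \<epsilon> d)) \<le> real j0 * sqrt (2 * C * \<epsilon>) + 2 * C * 1"
      using a C \<epsilon> j0 by (intro eps_ln_N_grid_le[OF \<gamma>]) auto
    also have "\<dots> \<le> X"
      unfolding X_def using a C by (intro add_mono mult_left_mono) (auto intro: mult_left_le)
    finally have "ln (real (N_grid (product_weights \<gamma>) \<epsilon> d)) \<le> X / \<epsilon>"
      using \<epsilon> by (simp add: field_simps)
    also have "\<dots> \<le> X / \<epsilon>0" using a \<epsilon>0 X by (intro divide_left_mono) auto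
    finally show "ln (real (N_grid (product_weights \<gamma>) \<epsilon> d)) \<le> X / \<epsilon>0" .
  qed
qed

lemma ln_N_grid_small_eps_le_inverse:
  assumes \<gamma>: "\<forall>i\<ge>1. 0 \<le> \<gamma> i \<and> \<gamma> i \<le> 1"
    and C: "0 < C" "\<forall>d. \<forall>u\<subseteq>{1..d}. leave_one_out_sum \<gamma> u \<le> C"
    and lim: "(\<lambda>j. real j * \<gamma> j) \<longlonglongrightarrow> 0" and \<delta>: "0 < \<delta>"
  shows "\<exists>\<epsilon>0>0. \<forall>\<epsilon> d. 0 < \<epsilon> \<and> \<epsilon> < \<epsilon>0 \<and> \<epsilon> < 1 \<and> 1 \<le> d \<longrightarrow>
           ln (real (N_grid (product_weights \<gamma>) \<epsilon> d)) \<le> \<delta> * (1 / \<epsilon>) powr 1"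
proof -
  define \<eta> where "\<eta> = \<delta> / (4 * C)"
  have \<eta>: "0 < \<eta>" "2 * C * \<eta> = \<delta> / 2" unfolding \<eta>_def using \<delta> C by auto
  obtain j0 where j0: "\<forall>j\<ge>j0. real j * \<gamma> j \<le> \<eta>"
    using eventually_le_of_LIMSEQ_zero[OF lim \<eta>(1)] .
  define \<epsilon>0 where "\<epsilon>0 = \<delta>\<^sup>2 / (8 * C * (real j0 + 1)\<^sup>2)"
  show ?thesis
  proof (intro exI[of _ \<epsilon>0] conjI allI impI)
    show "0 < \<epsilon>0" unfolding \<epsilon>0_def using \<delta> C by simp
    fix \<epsilon> :: real and d :: nat assume a: "0 < \<epsilon> \<and> \<epsilon> < \<epsilon>0 \<and> \<epsilon> < 1 \<and> 1 \<le> d"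
    have "(real j0)\<^sup>2 * (2 * C * \<epsilon>) \<le> (real j0 + 1)\<^sup>2 * (2 * C * \<epsilon>0)"
      using a C by (intro mult_mono power_mono) auto
    also have "\<dots> = (\<delta> / 2)\<^sup>2"
      unfolding \<epsilon>0_def using C by (simp add: field_simps add_pos_nonneg)
    finally have "sqrt ((real j0)\<^sup>2 * (2 * C * \<epsilon>)) \<le> \<delta> / 2"
      using \<delta> real_sqrt_le_mono[of _ "(\<delta> / 2)\<^sup>2"] by simp
    then have "real j0 * sqrt (2 * C * \<epsilon>) \<le> \<delta> / 2" by (simp add: real_sqrt_mult)
    then have "\<epsilon> * ln (real (N_grid (product_weights \<gamma>) \<epsilon> d)) \<le> \<delta>"
      using eps_ln_N_grid_le[OF \<gamma> C(1) spec[OF C(2), of d], of \<epsilon> \<eta> j0] a \<eta> j0 by simp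
    then show "ln (real (N_grid (product_weights \<gamma>) \<epsilon> d)) \<le> \<delta> * (1 / \<epsilon>) powr 1"
      using a by (simp add: field_simps)
  qed
qed

lemma leave_one_out_sum_uniformly_bounded:
  assumes \<gamma>: "\<forall>i\<ge>1. 0 \<le> \<gamma> i \<and> \<gamma> i \<le> 1" and lim: "(\<lambda>j. real j * \<gamma> j) \<longlonglongrightarrow> 0"
  obtains C where "0 < C" "\<forall>d. \<forall>u\<subseteq>{1..d}. leave_one_out_sum \<gamma> u \<le> C"
proof -
  obtain j0 where j0: "\<forall>j\<ge>j0. real j * \<gamma> j \<le> 1/2"
    using eventually_le_of_LIMSEQ_zero[OF lim] by (meson half_gt_zero zero_less_one)
  define q where "q = max j0 1"
  have "\<gamma> i \<le> 1/2" if "q \<le> i" for i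
  proof -
    have "\<gamma> i \<le> real i * \<gamma> i"
      using that \<gamma>[rule_format, of i] unfolding q_def by (simp add: mult_le_cancel_right1)
    also have "\<dots> \<le> 1/2" using that j0 unfolding q_def by simp
    finally show ?thesis .
  qed
  then have "leave_one_out_sum \<gamma> u \<le> 2 ^ (q + 1)" if "u \<subseteq> {1..d}" for u d
    using that \<gamma> by (intro leave_one_out_sum_le_pow2) (auto intro: finite_subset)
  then show ?thesis using that[of "2 ^ (q + 1)"] by simp
qed

lemma grid_WT_if_decay:
  assumes \<gamma>: "\<forall>i\<ge>1. 0 \<le> \<gamma> i \<and> \<gamma> i \<le> 1" and lim: "(\<lambda>j. real j * \<gamma> j) \<longlonglongrightarrow> 0"
  shows "grid_WT (product_weights \<gamma>)"
proof -
  obtain C where C: "0 < C" "\<forall>d. \<forall>u\<subseteq>{1..d}. leave_one_out_sum \<gamma> u \<le> C"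
    using leave_one_out_sum_uniformly_bounded[OF \<gamma> lim] .
  have "\<forall>\<delta>>0. \<exists>K. \<forall>\<epsilon> d. 0 < \<epsilon> \<and> \<epsilon> < 1 \<and> d \<ge> 1 \<and> (1 / \<epsilon>) powr 1 + real d powr 1 > K \<longrightarrow>
      \<bar>ln (real (N_grid (product_weights \<gamma>) \<epsilon> d)) / ((1 / \<epsilon>) powr 1 + real d powr 1)\<bar> \<le> \<delta>"
    by (intro tractable_of_ln_bounds N_grid_ge_1[OF \<gamma>] ln_N_grid_small_eps_le_inverse[OF \<gamma> C lim]
        ln_N_grid_bounded[OF \<gamma> C lim])
  then show ?thesis unfolding grid_WT_def by (simp add: abs_of_pos cong: conj_cong)
qed

lemma ln_mesh_size_le_uniform:
  assumes "0 < C" "0 < \<epsilon>" "\<epsilon> \<le> 1" "0 \<le> \<gamma> j" "\<gamma> j \<le> 1"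
  shows "ln (real (mesh_size C \<gamma> \<epsilon> j)) \<le> ln ((1 + C / 2) / \<epsilon>)"
proof -
  have "C * \<gamma> j / (2 * \<epsilon>) \<le> C / (2 * \<epsilon>)"
    using assms by (intro divide_right_mono mult_left_le) auto
  moreover have "1 \<le> 1 / \<epsilon>" using assms by simp
  ultimately have "1 + C * \<gamma> j / (2 * \<epsilon>) \<le> 1 / \<epsilon> + C / (2 * \<epsilon>)" by linarith
  also have "\<dots> = (1 + C / 2) / \<epsilon>" using assms by (simp add: field_simps)
  finally have "1 + C * \<gamma> j / (2 * \<epsilon>) \<le> (1 + C / 2) / \<epsilon>" .
  then have "ln (1 + C * \<gamma> j / (2 * \<epsilon>)) \<le> ln ((1 + C / 2) / \<epsilon>)"
    using assms by (subst ln_le_cancel_iff) (auto intro: add_pos_nonneg)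
  then show ?thesis using ln_mesh_size_le[of C \<epsilon> \<gamma> j] assms by simp
qed

lemma sum_ln_mesh_size_le_of_power_decay:
  assumes \<gamma>: "\<forall>i\<ge>1. 0 \<le> \<gamma> i \<and> \<gamma> i \<le> 1" and C: "0 < C" and \<epsilon>: "0 < \<epsilon>" "\<epsilon> \<le> 1"
    and n: "1 \<le> n" and j0: "\<forall>j\<ge>j0. real j ^ n * \<gamma> j \<le> 1"
  shows "(\<Sum>j\<in>{1..d}. ln (real (mesh_size C \<gamma> \<epsilon> j)))
       \<le> (real j0 + 2) * real n * ((1 + C / 2) / \<epsilon>) powr (2 / real n)"
proof -
  define y where "y = (1 + C / 2) / \<epsilon>"
  define w where "w = y powr (1 / real n)"
  define f where "f j = ln (real (mesh_size C \<gamma> \<epsilon> j))" for j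
  have y: "1 \<le> y" unfolding y_def using C \<epsilon> by (simp add: le_divide_eq)
  then have w: "1 \<le> w" "w ^ n = y" unfolding w_def using n
    by (auto simp: ge_one_powr_ge_zero powr_realpow[symmetric] powr_powr)
  have vanish: "f j = 0" if j: "j0 + nat \<lceil>w\<rceil> \<le> j" for j
  proof -
    have "w \<le> real j" using j by linarith
    then have "y \<le> real j ^ n" using w by (auto intro!: power_mono simp flip: w(2))
    moreover have "1 \<le> j" using j w by linarith
    ultimately have "y * \<gamma> j \<le> real j ^ n * \<gamma> j" using \<gamma> by (intro mult_right_mono) auto
    also have "\<dots> \<le> 1" using j0 j by simp
    finally have "\<gamma> j \<le> 1 / y" using y by (simp add: field_simps)
    then have "C * \<gamma> j \<le> C * (\<epsilon> / (1 + C / 2))"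
      using C by (intro mult_left_mono) (auto simp: y_def)
    also have "\<dots> \<le> 2 * \<epsilon>" using C \<epsilon> by (simp add: field_simps)
    finally show ?thesis unfolding f_def using \<epsilon> by (simp add: mesh_size_eq_1)
  qed
  have bound: "f j \<le> real n * w" if "1 \<le> j" for j
  proof -
    have "f j \<le> ln y"
      unfolding f_def y_def using \<gamma> that C \<epsilon> by (intro ln_mesh_size_le_uniform) auto
    also have "\<dots> \<le> real n * w" unfolding w_def using y n by (intro ln_le_mult_root) auto
    finally show ?thesis .
  qed
  have "sum f {1..d} = sum f ({1..d} \<inter> {..<j0 + nat \<lceil>w\<rceil>})"
    using vanish by (intro sum.mono_neutral_right) (auto, meson not_le)
  also have "\<dots> \<le> real (card ({1..d} \<inter> {..<j0 + nat \<lceil>w\<rceil>})) * (real n * w)"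
    using bound by (intro sum_bounded_above) auto
  also have "\<dots> \<le> (real j0 + w + 1) * (real n * w)"
    using card_mono[of "{..<j0 + nat \<lceil>w\<rceil>}" "{1..d} \<inter> {..<j0 + nat \<lceil>w\<rceil>}"] w
    by (intro mult_right_mono) (auto, linarith)
  also have "\<dots> \<le> (real j0 + 2) * w * (real n * w)"
    using w mult_left_mono[of 1 w "real j0"] by (intro mult_right_mono) (auto simp: algebra_simps)
  also have "\<dots> = (real j0 + 2) * real n * y powr (2 / real n)"
    unfolding w_def by (simp add: powr_add[symmetric] algebra_simps)
  finally show ?thesis unfolding f_def y_def .
qed

lemma ln_N_grid_le_of_power_decay:
  assumes \<gamma>: "\<forall>i\<ge>1. 0 \<le> \<gamma> i \<and> \<gamma> i \<le> 1"
    and C: "0 < C" "\<forall>d. \<forall>u\<subseteq>{1..d}. leave_one_out_sum \<gamma> u \<le> C"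
    and n: "1 \<le> n" and lim: "(\<lambda>j. real j ^ n * \<gamma> j) \<longlonglongrightarrow> 0"
  obtains A where "\<forall>\<epsilon> d. 0 < \<epsilon> \<and> \<epsilon> < 1 \<and> 1 \<le> d \<longrightarrow>
    ln (real (N_grid (product_weights \<gamma>) \<epsilon> d)) \<le> A * (1 / \<epsilon>) powr (2 / real n)"
proof -
  obtain j0 where j0: "\<forall>j\<ge>j0. real j ^ n * \<gamma> j \<le> 1"
    using eventually_le_of_LIMSEQ_zero[OF lim zero_less_one] .
  define A where "A = (real j0 + 2) * real n * (1 + C / 2) powr (2 / real n)"
  have "ln (real (N_grid (product_weights \<gamma>) \<epsilon> d)) \<le> A * (1 / \<epsilon>) powr (2 / real n)"
    if a: "0 < \<epsilon>" "\<epsilon> < 1" "1 \<le> d" for \<epsilon> d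
  proof -
    have "ln (real (N_grid (product_weights \<gamma>) \<epsilon> d)) \<le> (\<Sum>j\<in>{1..d}. ln (real (mesh_size C \<gamma> \<epsilon> j)))"
      using a C by (intro ln_N_grid_le_sum_ln_mesh_size[OF \<gamma>]) auto
    also have "\<dots> \<le> (real j0 + 2) * real n * ((1 + C / 2) / \<epsilon>) powr (2 / real n)"
      using a by (intro sum_ln_mesh_size_le_of_power_decay[OF \<gamma> C(1) _ _ n j0]) auto
    also have "\<dots> = A * (1 / \<epsilon>) powr (2 / real n)"
      unfolding A_def by (simp add: powr_divide)
    finally show ?thesis .
  qed
  then show ?thesis using that by blast
qed

lemma small_eps_mult_powr_le:
  fixes A :: real
  assumes "s < t" "0 < \<delta>"
  shows "\<exists>\<epsilon>0>0. \<forall>\<epsilon>. 0 < \<epsilon> \<and> \<epsilon> < \<epsilon>0 \<longrightarrow> A * (1 / \<epsilon>) powr s \<le> \<delta> * (1 / \<epsilon>) powr t"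
proof (intro exI[of _ "(\<delta> / (\<bar>A\<bar> + 1)) powr (1 / (t - s))"] conjI allI impI)
  show "0 < (\<delta> / (\<bar>A\<bar> + 1)) powr (1 / (t - s))" using assms by simp
  fix \<epsilon> :: real assume \<epsilon>: "0 < \<epsilon> \<and> \<epsilon> < (\<delta> / (\<bar>A\<bar> + 1)) powr (1 / (t - s))"
  then have "\<epsilon> powr (t - s) < ((\<delta> / (\<bar>A\<bar> + 1)) powr (1 / (t - s))) powr (t - s)"
    using assms by (intro powr_less_mono2) auto
  also have "\<dots> = \<delta> / (\<bar>A\<bar> + 1)" using assms by (simp add: powr_powr)
  finally have "\<bar>A\<bar> + 1 \<le> \<delta> * (1 / \<epsilon>) powr (t - s)"
    using \<epsilon> assms by (simp add: powr_divide field_simps)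
  have "A * (1 / \<epsilon>) powr s \<le> (\<bar>A\<bar> + 1) * (1 / \<epsilon>) powr s"
    by (intro mult_right_mono) auto
  also have "\<dots> \<le> \<delta> * (1 / \<epsilon>) powr (t - s) * (1 / \<epsilon>) powr s"
    using \<open>\<bar>A\<bar> + 1 \<le> _\<close> by (intro mult_right_mono) auto
  also have "\<dots> = \<delta> * (1 / \<epsilon>) powr t" by (simp add: powr_add[symmetric])
  finally show "A * (1 / \<epsilon>) powr s \<le> \<delta> * (1 / \<epsilon>) powr t" .
qed

lemma ln_N_grid_small_eps_le_powr:
  assumes \<gamma>: "\<forall>i\<ge>1. 0 \<le> \<gamma> i \<and> \<gamma> i \<le> 1"
    and C: "0 < C" "\<forall>d. \<forall>u\<subseteq>{1..d}. leave_one_out_sum \<gamma> u \<le> C"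
    and lims: "\<forall>n\<ge>1. (\<lambda>j. real j ^ n * \<gamma> j) \<longlonglongrightarrow> 0" and t: "0 < t" and \<delta>: "0 < \<delta>"
  shows "\<exists>\<epsilon>0>0. \<forall>\<epsilon> d. 0 < \<epsilon> \<and> \<epsilon> < \<epsilon>0 \<and> \<epsilon> < 1 \<and> 1 \<le> d \<longrightarrow>
           ln (real (N_grid (product_weights \<gamma>) \<epsilon> d)) \<le> \<delta> * (1 / \<epsilon>) powr t"
proof -
  define n where "n = nat \<lceil>3 / t\<rceil>"
  have n: "1 \<le> n" "3 / t \<le> real n"
    unfolding n_def using t real_nat_ceiling_ge[of "3 / t"] by (auto simp: Suc_le_eq)
  then have "2 / real n < t" using t by (simp add: field_simps)
  obtain A where A: "\<forall>\<epsilon> d. 0 < \<epsilon> \<and> \<epsilon> < 1 \<and> 1 \<le> d \<longrightarrow>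
      ln (real (N_grid (product_weights \<gamma>) \<epsilon> d)) \<le> A * (1 / \<epsilon>) powr (2 / real n)"
    using ln_N_grid_le_of_power_decay[OF \<gamma> C n(1) lims[rule_format, OF n(1)]] by blast
  obtain \<epsilon>0 where "0 < \<epsilon>0"
    and "\<forall>\<epsilon>. 0 < \<epsilon> \<and> \<epsilon> < \<epsilon>0 \<longrightarrow> A * (1 / \<epsilon>) powr (2 / real n) \<le> \<delta> * (1 / \<epsilon>) powr t"
    using small_eps_mult_powr_le[OF \<open>2 / real n < t\<close> \<delta>] by blast
  then show ?thesis using A by (meson order_trans)
qed

lemma grid_UWT_if_decay:
  assumes \<gamma>: "\<forall>i\<ge>1. 0 \<le> \<gamma> i \<and> \<gamma> i \<le> 1"
    and lims: "\<forall>n\<ge>1. (\<lambda>j. real j ^ n * \<gamma> j) \<longlonglongrightarrow> 0"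
  shows "grid_UWT (product_weights \<gamma>)"
proof -
  have lim: "(\<lambda>j. real j * \<gamma> j) \<longlonglongrightarrow> 0" using lims[rule_format, of 1] by simp
  obtain C where C: "0 < C" "\<forall>d. \<forall>u\<subseteq>{1..d}. leave_one_out_sum \<gamma> u \<le> C"
    using leave_one_out_sum_uniformly_bounded[OF \<gamma> lim] .
  show ?thesis unfolding grid_UWT_def
  proof (rule allI, rule allI, rule impI)
    fix t1 t2 :: real assume "0 < t1 \<and> t1 \<le> 1 \<and> 0 < t2 \<and> t2 \<le> 1"
    then show "\<forall>\<delta>>0. \<exists>K. \<forall>\<epsilon> d. 0 < \<epsilon> \<and> \<epsilon> < 1 \<and> 1 \<le> d \<and> (1 / \<epsilon>) powr t1 + real d powr t2 > K \<longrightarrow>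
        \<bar>ln (real (N_grid (product_weights \<gamma>) \<epsilon> d)) / ((1 / \<epsilon>) powr t1 + real d powr t2)\<bar> \<le> \<delta>"
      by (intro tractable_of_ln_bounds N_grid_ge_1[OF \<gamma>] ln_N_grid_small_eps_le_powr[OF \<gamma> C lims]
          ln_N_grid_bounded[OF \<gamma> C lim]) auto
  qed
qed

lemma ln_N_grid_ge_of_large_weight:
  assumes \<gamma>: "\<forall>i\<ge>1. 0 \<le> \<gamma> i \<and> \<gamma> i \<le> 1" and decreasing: "\<forall>i j. 1 \<le> i \<and> i \<le> j \<longrightarrow> \<gamma> j \<le> \<gamma> i"
    and j: "1 \<le> j" and r: "0 < r" "r \<le> real j ^ n * \<gamma> j"
  shows "r / (4 * real j ^ n) < 1"
    "real j * ln 2 \<le> ln (real (N_grid (product_weights \<gamma>) (r / (4 * real j ^ n)) j))"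
proof -
  define \<epsilon> where "\<epsilon> = r / (4 * real j ^ n)"
  have \<epsilon>: "0 < \<epsilon>" unfolding \<epsilon>_def using r j by simp
  have "4 * \<epsilon> \<le> \<gamma> j" unfolding \<epsilon>_def using r j by (simp add: field_simps)
  moreover have "\<gamma> j \<le> 1" using \<gamma> j by simp
  ultimately show "r / (4 * real j ^ n) < 1" using \<epsilon> unfolding \<epsilon>_def[symmetric] by linarith
  have "\<forall>i\<in>{1..j}. 2 * \<epsilon> < \<gamma> i" using decreasing \<epsilon> \<open>4 * \<epsilon> \<le> \<gamma> j\<close> by force
  then show "real j * ln 2 \<le> ln (real (N_grid (product_weights \<gamma>) (r / (4 * real j ^ n)) j))"
    unfolding \<epsilon>_def[symmetric] by (rule ln_N_grid_ge[OF \<gamma> \<epsilon> j])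
qed

lemma not_tractable_of_not_decay:
  assumes \<gamma>: "\<forall>i\<ge>1. 0 \<le> \<gamma> i \<and> \<gamma> i \<le> 1" and decreasing: "\<forall>i j. 1 \<le> i \<and> i \<le> j \<longrightarrow> \<gamma> j \<le> \<gamma> i"
    and n: "1 \<le> n" and not_lim: "\<not> (\<lambda>j. real j ^ n * \<gamma> j) \<longlonglongrightarrow> 0"
  shows "\<not> (\<forall>\<delta>>0. \<exists>K. \<forall>\<epsilon> d.
           0 < \<epsilon> \<and> \<epsilon> < 1 \<and> d \<ge> 1 \<and> (1 / \<epsilon>) powr (1 / real n) + real d powr 1 > K \<longrightarrow>
           \<bar>ln (real (N_grid (product_weights \<gamma>) \<epsilon> d)) / ((1 / \<epsilon>) powr (1 / real n) + real d powr 1)\<bar>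
             \<le> \<delta>)"
proof
  obtain r where r: "0 < r" and often: "\<forall>k. \<exists>j\<ge>k. \<not> \<bar>real j ^ n * \<gamma> j\<bar> < r"
    using not_lim unfolding LIMSEQ_iff by auto
  define B where "B = (4 / r) powr (1 / real n) + 1"
  have B: "1 \<le> B" unfolding B_def by simp
  assume tractable: "\<forall>\<delta>>0. \<exists>K. \<forall>\<epsilon> d.
      0 < \<epsilon> \<and> \<epsilon> < 1 \<and> d \<ge> 1 \<and> (1 / \<epsilon>) powr (1 / real n) + real d powr 1 > K \<longrightarrow>
      \<bar>ln (real (N_grid (product_weights \<gamma>) \<epsilon> d)) / ((1 / \<epsilon>) powr (1 / real n) + real d powr 1)\<bar> \<le> \<delta>"
  have "0 < ln 2 / (2 * B)" using B by simp
  then obtain K where K: "\<forall>\<epsilon> d. 0 < \<epsilon> \<and> \<epsilon> < 1 \<and> d \<ge> 1 \<and> (1 / \<epsilon>) powr (1 / real n) + real d powr 1 > K \<longrightarrow>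
      \<bar>ln (real (N_grid (product_weights \<gamma>) \<epsilon> d)) / ((1 / \<epsilon>) powr (1 / real n) + real d powr 1)\<bar>
        \<le> ln 2 / (2 * B)"
    using tractable by blast
  obtain j where j: "nat \<lceil>K\<rceil> + 1 \<le> j" and large: "r \<le> \<bar>real j ^ n * \<gamma> j\<bar>"
    using often by (meson not_less)
  have j1: "1 \<le> j" and jK: "K < real j" using j by linarith+
  have large': "r \<le> real j ^ n * \<gamma> j" using large \<gamma> j1 by simp
  define \<epsilon> where "\<epsilon> = r / (4 * real j ^ n)"
  have \<epsilon>: "0 < \<epsilon>" "\<epsilon> < 1" "real j * ln 2 \<le> ln (real (N_grid (product_weights \<gamma>) \<epsilon> j))"
    unfolding \<epsilon>_def using ln_N_grid_ge_of_large_weight[OF \<gamma> decreasing j1 r large'] r j1 by auto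
  have D: "(1 / \<epsilon>) powr (1 / real n) + real j powr 1 = B * real j"
  proof -
    have "1 / \<epsilon> = (4 / r) * real j powr real n" unfolding \<epsilon>_def using j1 by (simp add: powr_realpow)
    then have "(1 / \<epsilon>) powr (1 / real n)
        = (4 / r) powr (1 / real n) * (real j powr real n) powr (1 / real n)"
      by (simp only: powr_mult)
    also have "\<dots> = (4 / r) powr (1 / real n) * real j" using n by (simp add: powr_powr)
    finally show ?thesis unfolding B_def by (simp add: algebra_simps)
  qed
  from \<epsilon>(3) have "ln 2 / B \<le> \<bar>ln (real (N_grid (product_weights \<gamma>) \<epsilon> j)) / (B * real j)\<bar>"
    using B j1 by (simp add: field_simps)
  also have "\<dots> \<le> ln 2 / (2 * B)"
  proof -
    have "K < B * real j" using B jK mult_right_mono[of 1 B "real j"] by simp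
    then show ?thesis using K[rule_format, of \<epsilon> j] \<epsilon> j1 unfolding D by simp
  qed
  finally show False using B by (simp add: field_simps)
qed

lemma grid_WT_iff_powr_one:
  "grid_WT W \<longleftrightarrow> (\<forall>\<delta>>0. \<exists>K. \<forall>\<epsilon> d. 0 < \<epsilon> \<and> \<epsilon> < 1 \<and> d \<ge> 1 \<and> (1 / \<epsilon>) powr 1 + real d powr 1 > K \<longrightarrow>
     \<bar>ln (real (N_grid W \<epsilon> d)) / ((1 / \<epsilon>) powr 1 + real d powr 1)\<bar> \<le> \<delta>)"
  unfolding grid_WT_def by (simp add: abs_of_pos cong: conj_cong)

lemma decay_if_grid_WT:
  assumes \<gamma>: "\<forall>i\<ge>1. 0 \<le> \<gamma> i \<and> \<gamma> i \<le> 1" and decreasing: "\<forall>i j. 1 \<le> i \<and> i \<le> j \<longrightarrow> \<gamma> j \<le> \<gamma> i"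
    and "grid_WT (product_weights \<gamma>)"
  shows "(\<lambda>j. real j * \<gamma> j) \<longlonglongrightarrow> 0"
  using not_tractable_of_not_decay[OF \<gamma> decreasing order_refl] assms(3)
  unfolding grid_WT_iff_powr_one of_nat_1 div_by_1 power_one_right by blast

lemma decay_if_grid_UWT:
  assumes \<gamma>: "\<forall>i\<ge>1. 0 \<le> \<gamma> i \<and> \<gamma> i \<le> 1" and decreasing: "\<forall>i j. 1 \<le> i \<and> i \<le> j \<longrightarrow> \<gamma> j \<le> \<gamma> i"
    and UWT: "grid_UWT (product_weights \<gamma>)" and n: "1 \<le> n"
  shows "(\<lambda>j. real j ^ n * \<gamma> j) \<longlonglongrightarrow> 0"
proof (rule ccontr)
  assume "\<not> (\<lambda>j. real j ^ n * \<gamma> j) \<longlonglongrightarrow> 0"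
  moreover have "0 < 1 / real n \<and> 1 / real n \<le> 1" using n by simp
  ultimately show False
    using not_tractable_of_not_decay[OF \<gamma> decreasing n] UWT unfolding grid_UWT_def
    by (meson order_refl zero_less_one)
qed

lemma antimono_from_one:
  fixes \<gamma> :: "nat \<Rightarrow> real"
  assumes "\<And>j. 1 \<le> j \<Longrightarrow> \<gamma> (Suc j) \<le> \<gamma> j"
  shows "\<forall>i j. 1 \<le> i \<and> i \<le> j \<longrightarrow> \<gamma> j \<le> \<gamma> i"
proof (intro allI impI, elim conjE)
  fix i j :: nat assume "1 \<le> i" "i \<le> j"
  from \<open>i \<le> j\<close> show "\<gamma> j \<le> \<gamma> i"
  proof (induction j rule: dec_induct)
    case (step k)
    then show ?case using assms[of k] \<open>1 \<le> i\<close> by simp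
  qed simp
qed

theorem theorem1:
  fixes \<gamma> :: "nat \<Rightarrow> real"
  assumes "\<gamma> 1 \<le> 1"
    and "\<And>j. j \<ge> 1 \<Longrightarrow> \<gamma> (Suc j) \<le> \<gamma> j"
    and "\<And>j. j \<ge> 1 \<Longrightarrow> 0 \<le> \<gamma> j"
  shows "(grid_WT (product_weights \<gamma>) \<longleftrightarrow> (\<lambda>j. real j * \<gamma> j) \<longlonglongrightarrow> 0)
       \<and> (grid_UWT (product_weights \<gamma>) \<longleftrightarrow> (\<forall>n::nat. n \<ge> 1 \<longrightarrow> (\<lambda>j. real j ^ n * \<gamma> j) \<longlonglongrightarrow> 0))"
proof -
  have decreasing: "\<forall>i j. 1 \<le> i \<and> i \<le> j \<longrightarrow> \<gamma> j \<le> \<gamma> i"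
    using assms(2) by (rule antimono_from_one)
  have \<gamma>: "\<forall>i\<ge>1. 0 \<le> \<gamma> i \<and> \<gamma> i \<le> 1"
    using assms(1,3) decreasing by (meson order_refl order_trans)
  show ?thesis
    using grid_WT_if_decay[OF \<gamma>] decay_if_grid_WT[OF \<gamma> decreasing]
      grid_UWT_if_decay[OF \<gamma>] decay_if_grid_UWT[OF \<gamma> decreasing] by blast
qed

end
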